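(* Let $k$ be a field of characteristic $p>2$ ($p$ prime). For any $u,v,w\in k_0\langle X\rangle$, $\kappa(u,vw)\equiv 0\pmod{T(G_0)}$.
   Context: $X=\{x_i\mid i\ge0\}$ is countably infinite; $k_0\langle X\rangle$ is the free nonunitary associative $k$-algebra on $X$. $[a,b]=ab-ba$ and $\kappa(u,v)=[u,v]u^{p-1}v^{p-1}$. $G_0$ is the infinite-dimensional nonunitary Grassmann algebra over $k$ (linear basis the products $e_{i_1}\cdots e_{i_n}$, $n\ge1$, $i_1<\dots<i_n$, with $e_ie_j=-e_je_i$, $e_i^2=0$), and $T(G_0)$ is the set of $f\in k_0\langle X\rangle$ lying in the kernel of every algebra homomorphism $k_0\langle X\rangle\to G_0$. *)

theory Defs
  imports Main "HOL-Computational_Algebra.Primes"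
begin

text \<open>An element is a finitely supported k-valued function on words (lists of
  generator indices); the empty word has coefficient 0 (nonunitary).\<close>

definition FA :: "(nat list \<Rightarrow> 'k::field) set" where
  "FA = {f. finite {w. f w \<noteq> 0} \<and> f [] = 0}"

definition fa_add :: "(nat list \<Rightarrow> 'k::field) \<Rightarrow> (nat list \<Rightarrow> 'k) \<Rightarrow> (nat list \<Rightarrow> 'k)" where
  "fa_add f g = (\<lambda>w. f w + g w)"

definition fa_smult :: "'k::field \<Rightarrow> (nat list \<Rightarrow> 'k) \<Rightarrow> (nat list \<Rightarrow> 'k)" where
  "fa_smult c f = (\<lambda>w. c * f w)"

definition fa_mult :: "(nat list \<Rightarrow> 'k::field) \<Rightarrow> (nat list \<Rightarrow> 'k) \<Rightarrow> (nat list \<Rightarrow> 'k)" where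
  "fa_mult f g = (\<lambda>w. \<Sum>i\<le>length w. f (take i w) * g (drop i w))"

definition fa_comm :: "(nat list \<Rightarrow> 'k::field) \<Rightarrow> (nat list \<Rightarrow> 'k) \<Rightarrow> (nat list \<Rightarrow> 'k)" where
  "fa_comm a b = fa_add (fa_mult a b) (fa_smult (-1) (fa_mult b a))"

text \<open>Positive powers u^n, n >= 1 (fa_pow u 0 is the zero element; never used).\<close>
fun fa_pow :: "(nat list \<Rightarrow> 'k::field) \<Rightarrow> nat \<Rightarrow> (nat list \<Rightarrow> 'k)" where
  "fa_pow f 0 = (\<lambda>_. 0)"
| "fa_pow f (Suc n) = (if n = 0 then f else fa_mult (fa_pow f n) f)"

definition kappa :: "nat \<Rightarrow> (nat list \<Rightarrow> 'k::field) \<Rightarrow> (nat list \<Rightarrow> 'k) \<Rightarrow> (nat list \<Rightarrow> 'k)" where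
  "kappa p u v = fa_mult (fa_mult (fa_comm u v) (fa_pow u (p - 1))) (fa_pow v (p - 1))"

text \<open>Element: finitely supported k-valued function on index sets, supported on
  finite nonempty sets S = {i_1 < ... < i_n}, standing for e_{i_1}...e_{i_n}.\<close>

definition G0 :: "(nat set \<Rightarrow> 'k::field) set" where
  "G0 = {a. finite {S. a S \<noteq> 0} \<and> (\<forall>S. a S \<noteq> 0 \<longrightarrow> finite S \<and> S \<noteq> {})}"

text \<open>For disjoint T, U: e_T e_U = (-1)^(#{(t,u) in T x U. t > u}) e_(T Un U).\<close>
definition gsign :: "nat set \<Rightarrow> nat set \<Rightarrow> 'k::field" where
  "gsign T U = (-1) ^ card {(t, u). t \<in> T \<and> u \<in> U \<and> u < t}"

definition g_add :: "(nat set \<Rightarrow> 'k::field) \<Rightarrow> (nat set \<Rightarrow> 'k) \<Rightarrow> (nat set \<Rightarrow> 'k)" where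
  "g_add a b = (\<lambda>S. a S + b S)"

definition g_smult :: "'k::field \<Rightarrow> (nat set \<Rightarrow> 'k) \<Rightarrow> (nat set \<Rightarrow> 'k)" where
  "g_smult c a = (\<lambda>S. c * a S)"

definition g_mult :: "(nat set \<Rightarrow> 'k::field) \<Rightarrow> (nat set \<Rightarrow> 'k) \<Rightarrow> (nat set \<Rightarrow> 'k)" where
  "g_mult a b = (\<lambda>S. \<Sum>T\<in>Pow S. gsign T (S - T) * a T * b (S - T))"

definition fa_hom :: "((nat list \<Rightarrow> 'k::field) \<Rightarrow> (nat set \<Rightarrow> 'k)) \<Rightarrow> bool" where
  "fa_hom h \<longleftrightarrow>
     (\<forall>f\<in>FA. h f \<in> G0) \<and>
     (\<forall>f\<in>FA. \<forall>g\<in>FA. h (fa_add f g) = g_add (h f) (h g)) \<and>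
     (\<forall>c. \<forall>f\<in>FA. h (fa_smult c f) = g_smult c (h f)) \<and>
     (\<forall>f\<in>FA. \<forall>g\<in>FA. h (fa_mult f g) = g_mult (h f) (h g))"

definition TG0 :: "(nat list \<Rightarrow> 'k::field) set" where
  "TG0 = {f\<in>FA. \<forall>h. fa_hom h \<longrightarrow> h f = (\<lambda>_. 0)}"

end

theory Submission
  imports Defs
begin

text \<open>Let \<open>a, b, c\<close> be the images of \<open>u, v, w\<close> under a homomorphism into the Grassmann
  algebra, split into even and odd parts \<open>a = a0 + a1\<close> etc. Even elements are central, odd
  ones anticommute and (as \<open>2 \<noteq> 0\<close>) square to zero. An even element without constant term is
  a sum of commuting square-zero monomials, so its \<open>p\<close>-th power vanishes in characteristic \<open>p\<close>.
  With \<open>bc = x0 + x1\<close>, \<open>x0 = b0 c0 + b1 c1\<close>, \<open>x1 = b0 c1 + b1 c0\<close>, the commutator \<open>[a, bc]\<close> is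
  \<open>2 a1 x1\<close>, and \<open>a1 x1 a^(p-1) (bc)^(p-1) = a0^(p-1) a1 x0^(p-1) x1\<close>. Since \<open>b1 c1\<close> annihilates
  \<open>x1\<close>, finally \<open>x0^(p-1) x1 = b0^(p-1) c0^(p-1) x1 = b0^p c0^(p-1) c1 + b0^(p-1) b1 c0^p = 0\<close>.\<close>

lemma power_mult_commuting:
  fixes y z :: "'a::monoid_mult"
  assumes "y * z = z * y"
  shows "(y * z) ^ n = y ^ n * z ^ n"
proof (induction n)
  case (Suc n)
  have "(y * z) ^ Suc n = y * (z * y ^ n) * z ^ n" by (simp add: Suc mult.assoc)
  also have "\<dots> = y ^ Suc n * z ^ Suc n"
    by (simp add: power_commuting_commutes[OF assms, symmetric] mult.assoc)
  finally show ?case .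
qed simp

lemma power_add_square_zero:
  fixes y z :: "'a::ring_1"
  assumes "y * z = z * y" and "z * z = 0"
  shows "(y + z) ^ Suc n = y ^ Suc n + of_nat (Suc n) * (y ^ n * z)"
proof (induction n)
  case (Suc n)
  have "y ^ n * z * y = y ^ Suc n * z"
    by (metis assms(1) mult.assoc power_Suc2)
  moreover have "y ^ n * z * z = 0" by (simp add: mult.assoc assms(2))
  ultimately have "(y ^ Suc n + of_nat (Suc n) * (y ^ n * z)) * (y + z)
      = y ^ Suc (Suc n) + of_nat (Suc (Suc n)) * (y ^ Suc n * z)"
    by (simp add: algebra_simps power_commutes)
  then show ?case by (simp only: power_Suc2[of _ "Suc n"] Suc)
qed simp

lemma mult_power_intertwine:
  fixes w a b :: "'a::monoid_mult"
  assumes "w * a = b * w"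
  shows "w * a ^ n = b ^ n * w"
proof (induction n)
  case (Suc n)
  have "w * a ^ Suc n = w * a ^ n * a" by (simp only: power_Suc2 mult.assoc)
  also have "\<dots> = b ^ n * (w * a)" by (simp only: Suc mult.assoc)
  also have "\<dots> = b ^ Suc n * w" by (simp only: assms power_Suc2 mult.assoc)
  finally show ?case .
qed simp

lemma power_add_mult_annihilated:
  fixes x y z :: "'a::ring_1"
  assumes "y * z = z * y" and "z * x = 0"
  shows "(y + z) ^ n * x = y ^ n * x"
proof (induction n)
  case (Suc n)
  have "(y + z) ^ Suc n * x = (y + z) * (y ^ n * x)"
    by (simp only: power_Suc mult.assoc Suc)
  also have "\<dots> = y ^ Suc n * x + (z * y ^ n) * x"
    by (simp only: distrib_right power_Suc mult.assoc)
  also have "\<dots> = y ^ Suc n * x"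
    by (simp add: power_commuting_commutes[OF assms(1), symmetric] mult.assoc assms(2))
  finally show ?case .
qed simp

section \<open>Signs of the Grassmann product\<close>

definition inversions :: "nat set \<Rightarrow> nat set \<Rightarrow> nat" where
  "inversions T U = card {(t, u). t \<in> T \<and> u \<in> U \<and> u < t}"

lemma gsign_eq_inversions: "gsign T U = (-1) ^ inversions T U"
  by (simp add: gsign_def inversions_def)

lemma finite_inversion_pairs:
  "finite T \<Longrightarrow> finite U \<Longrightarrow> finite {(t, u). t \<in> T \<and> u \<in> U \<and> P t u}"
  by (rule finite_subset[of _ "T \<times> U"]) auto

lemma inversions_Un_right:
  assumes "finite T" "finite U" "finite V" "U \<inter> V = {}"
  shows "inversions T (U \<union> V) = inversions T U + inversions T V"
proof -
  have "{(t, u). t \<in> T \<and> u \<in> U \<union> V \<and> u < t} =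
     {(t, u). t \<in> T \<and> u \<in> U \<and> u < t} \<union> {(t, u). t \<in> T \<and> u \<in> V \<and> u < t}" by auto
  then show ?thesis
    unfolding inversions_def using assms
    by (simp add: card_Un_disjoint finite_inversion_pairs disjoint_iff)
qed

lemma inversions_Un_left:
  assumes "finite T" "finite U" "finite V" "T \<inter> U = {}"
  shows "inversions (T \<union> U) V = inversions T V + inversions U V"
proof -
  have "{(t, u). t \<in> T \<union> U \<and> u \<in> V \<and> u < t} =
     {(t, u). t \<in> T \<and> u \<in> V \<and> u < t} \<union> {(t, u). t \<in> U \<and> u \<in> V \<and> u < t}" by auto
  then show ?thesis
    unfolding inversions_def using assms
    by (simp add: card_Un_disjoint finite_inversion_pairs disjoint_iff)
qed

lemma inversions_swap:
  assumes "finite T" "finite U" "T \<inter> U = {}"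
  shows "inversions T U + inversions U T = card T * card U"
proof -
  let ?A = "{(t, u). t \<in> T \<and> u \<in> U \<and> u < t}"
  let ?B = "{(t, u). t \<in> T \<and> u \<in> U \<and> t < u}"
  have "T \<times> U = ?A \<union> ?B" using assms by auto
  then have "card (T \<times> U) = card ?A + card ?B"
    using assms by (simp add: card_Un_disjoint finite_inversion_pairs disjoint_iff)
  moreover have "?B = prod.swap ` {(t, u). t \<in> U \<and> u \<in> T \<and> u < t}" by auto
  then have "card ?B = inversions U T"
    unfolding inversions_def by (simp add: card_image)
  ultimately show ?thesis by (simp add: inversions_def card_cartesian_product)
qed

lemma gsign_swap:
  assumes "finite T" "finite U" "T \<inter> U = {}"
  shows "(gsign U T :: 'k::field) = (-1) ^ (card T * card U) * gsign T U"
proof -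
  have "(-1::'k) ^ (card T * card U) * gsign T U
      = (-1) ^ inversions U T * ((-1) ^ inversions T U * (-1) ^ inversions T U)"
    by (simp flip: inversions_swap[OF assms] add: gsign_eq_inversions power_add ac_simps)
  also have "\<dots> = (-1) ^ inversions U T"
    by (simp flip: power_add add: power_mult_distrib)
  finally show ?thesis by (simp add: gsign_eq_inversions)
qed

lemma gsign_cocycle:
  assumes "finite T" "finite U" "finite V" "T \<inter> U = {}" "T \<inter> V = {}" "U \<inter> V = {}"
  shows "(gsign T U :: 'k::field) * gsign (T \<union> U) V = gsign U V * gsign T (U \<union> V)"
  using assms
  by (simp add: gsign_eq_inversions inversions_Un_left inversions_Un_right power_add algebra_simps)

lemma g_mult_infinite: "infinite S \<Longrightarrow> g_mult a b S = 0"
  by (simp add: g_mult_def)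

lemma g_mult_assoc_finite:
  assumes S: "finite S"
  shows "g_mult (g_mult a b) c S = g_mult a (g_mult b c) S"
proof -
  let ?g = "gsign :: nat set \<Rightarrow> nat set \<Rightarrow> 'a"
  have "g_mult (g_mult a b) c S =
     (\<Sum>(T, R)\<in>Sigma (Pow S) Pow. ?g T (S - T) * (?g R (T - R) * a R * b (T - R)) * c (S - T))"
    unfolding g_mult_def sum_distrib_left sum_distrib_right using S
    by (subst sum.Sigma) (auto intro: finite_subset)
  also have "\<dots> = (\<Sum>(R, Q)\<in>Sigma (Pow S) (\<lambda>R. Pow (S - R)).
                    ?g R (S - R) * a R * (?g Q (S - R - Q) * b Q * c (S - R - Q)))"
  proof (rule sum.reindex_bij_witness[where i = "\<lambda>(R, Q). (R \<union> Q, R)" and j = "\<lambda>(T, R). (R, T - R)"])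
    fix x assume "x \<in> Sigma (Pow S) Pow"
    then obtain T R where x: "x = (T, R)" "T \<subseteq> S" "R \<subseteq> T" by auto
    have "finite R" "finite (T - R)" "finite (S - T)"
      using x S by (auto intro: finite_subset)
    then have "?g R (T - R) * ?g (R \<union> (T - R)) (S - T) = ?g (T - R) (S - T) * ?g R ((T - R) \<union> (S - T))"
      using x by (intro gsign_cocycle) auto
    moreover have "R \<union> (T - R) = T" "(T - R) \<union> (S - T) = S - R" "S - R - (T - R) = S - T"
      using x by auto
    ultimately have sign: "?g R (T - R) * ?g T (S - T) = ?g (T - R) (S - T) * ?g R (S - R)"
      by simp
    have "?g R (S - R) * a R * (?g (T - R) (S - T) * b (T - R) * c (S - T))
        = (?g (T - R) (S - T) * ?g R (S - R)) * (a R * b (T - R) * c (S - T))"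
      by (simp only: ac_simps)
    also have "\<dots> = ?g T (S - T) * (?g R (T - R) * a R * b (T - R)) * c (S - T)"
      unfolding sign[symmetric] by (simp only: ac_simps)
    finally show "(case (case x of (T, R) \<Rightarrow> (R, T - R)) of (R, Q) \<Rightarrow>
        ?g R (S - R) * a R * (?g Q (S - R - Q) * b Q * c (S - R - Q))) =
      (case x of (T, R) \<Rightarrow> ?g T (S - T) * (?g R (T - R) * a R * b (T - R)) * c (S - T))"
      unfolding x(1) prod.case \<open>S - R - (T - R) = S - T\<close> .
  qed auto
  also have "\<dots> = g_mult a (g_mult b c) S"
    unfolding g_mult_def sum_distrib_left using S by (subst sum.Sigma) auto
  finally show ?thesis .
qed

lemma g_mult_assoc: "g_mult (g_mult a b) c = g_mult a (g_mult b c)"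
proof
  show "g_mult (g_mult a b) c S = g_mult a (g_mult b c) S" for S
    by (cases "finite S") (simp_all add: g_mult_assoc_finite g_mult_infinite)
qed

lemma g_mult_distrib_left: "g_mult a (\<lambda>S. b S + c S) = (\<lambda>S. g_mult a b S + g_mult a c S)"
  by (simp add: g_mult_def fun_eq_iff algebra_simps sum.distrib)

lemma g_mult_distrib_right: "g_mult (\<lambda>S. a S + b S) c = (\<lambda>S. g_mult a c S + g_mult b c S)"
  by (simp add: g_mult_def fun_eq_iff algebra_simps sum.distrib)

lemma g_mult_one_left:
  assumes "\<forall>S. infinite S \<longrightarrow> a S = 0"
  shows "g_mult (\<lambda>S. if S = {} then 1 else 0) a = a"
proof
  fix S
  have "finite S \<Longrightarrow> g_mult (\<lambda>S. if S = {} then 1 else 0) a S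
      = (\<Sum>T\<in>Pow S. if T = {} then gsign T (S - T) * a (S - T) else 0)"
    unfolding g_mult_def by (intro sum.cong) auto
  then show "g_mult (\<lambda>S. if S = {} then 1 else 0) a S = a S"
    using assms by (cases "finite S") (simp_all add: gsign_def g_mult_infinite)
qed

lemma g_mult_one_right:
  assumes "\<forall>S. infinite S \<longrightarrow> a S = 0"
  shows "g_mult a (\<lambda>S. if S = {} then 1 else 0) = a"
proof
  fix S
  have "finite S \<Longrightarrow> g_mult a (\<lambda>S. if S = {} then 1 else 0) S
      = (\<Sum>T\<in>Pow S. if T = S then gsign T (S - T) * a T else 0)"
    unfolding g_mult_def by (intro sum.cong) auto
  then show "g_mult a (\<lambda>S. if S = {} then 1 else 0) S = a S"
    using assms by (cases "finite S") (simp_all add: gsign_def g_mult_infinite)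
qed

section \<open>The Grassmann algebra as a ring\<close>

text \<open>The unital Grassmann algebra, allowing infinitely many nonzero coefficients: the product
  formula only sums over subsets of a finite set. It contains
  \<open>G\<^sub>0\<close> and, unlike \<open>G\<^sub>0\<close>, is a ring with unit, so the generic ring library applies.\<close>

typedef (overloaded) 'k grassmann = "{a :: nat set \<Rightarrow> 'k::field. \<forall>S. infinite S \<longrightarrow> a S = 0}"
  morphisms rep Abs_grassmann by (rule exI[of _ "\<lambda>_. 0"]) simp

setup_lifting type_definition_grassmann

instantiation grassmann :: (field) ring_1
begin
lift_definition zero_grassmann :: "'a grassmann" is "\<lambda>_. 0" by simp
lift_definition one_grassmann :: "'a grassmann" is "\<lambda>S. if S = {} then 1 else 0" by auto
lift_definition plus_grassmann :: "'a grassmann \<Rightarrow> 'a grassmann \<Rightarrow> 'a grassmann"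
  is "\<lambda>a b S. a S + b S" by simp
lift_definition minus_grassmann :: "'a grassmann \<Rightarrow> 'a grassmann \<Rightarrow> 'a grassmann"
  is "\<lambda>a b S. a S - b S" by simp
lift_definition uminus_grassmann :: "'a grassmann \<Rightarrow> 'a grassmann" is "\<lambda>a S. - a S" by simp
lift_definition times_grassmann :: "'a grassmann \<Rightarrow> 'a grassmann \<Rightarrow> 'a grassmann"
  is g_mult by (simp add: g_mult_infinite)
instance
proof
  fix a b c :: "'a grassmann"
  show "a * b * c = a * (b * c)" by transfer (rule g_mult_assoc)
  show "(a + b) * c = a * c + b * c" by transfer (rule g_mult_distrib_right)
  show "a * (b + c) = a * b + a * c" by transfer (rule g_mult_distrib_left)
  show "1 * a = a" by transfer (rule g_mult_one_left)
  show "a * 1 = a" by transfer (rule g_mult_one_right)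
  show "a + b + c = a + (b + c)" by transfer (simp add: add.assoc)
  show "a + b = b + a" by transfer (simp add: add.commute)
  show "0 + a = a" by transfer simp
  show "- a + a = 0" by transfer simp
  show "a - b = a + - b" by transfer simp
  show "(0::'a grassmann) \<noteq> 1" by transfer (simp add: fun_eq_iff)
qed
end

lemma rep_times: "rep (x * y) = g_mult (rep x) (rep y)" by transfer simp
lemma rep_plus: "rep (x + y) = (\<lambda>S. rep x S + rep y S)" by transfer simp
lemma rep_minus: "rep (x - y) = (\<lambda>S. rep x S - rep y S)" by transfer simp
lemma rep_uminus: "rep (- x) = (\<lambda>S. - rep x S)" by transfer simp
lemma rep_zero: "rep 0 = (\<lambda>_. 0)" by transfer simp
lemma rep_one: "rep 1 = (\<lambda>S. if S = {} then 1 else 0)" by transfer simp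
lemma rep_infinite: "infinite S \<Longrightarrow> rep x S = 0" using rep[of x] by auto

lemma rep_of_nat: "rep (of_nat n) = (\<lambda>S. if S = {} then of_nat n else 0)"
  by (induction n) (auto simp: rep_plus rep_one rep_zero)

lemma grassmann_eqI: "(\<And>S. rep x S = rep y S) \<Longrightarrow> x = y"
  by (simp add: rep_inject[symmetric] fun_eq_iff)

lemma of_nat_grassmann_eq_0: "of_nat n = (0::'k::field) \<Longrightarrow> (of_nat n :: 'k grassmann) = 0"
  by (rule grassmann_eqI) (simp add: rep_of_nat rep_zero)

lemma rep_times_swap:
  assumes S: "finite S"
  shows "rep (y * x) S =
    (\<Sum>T\<in>Pow S. (-1) ^ (card T * card (S - T)) * (gsign T (S - T) * rep x T * rep y (S - T)))"
proof -
  have "rep (y * x) S = (\<Sum>T\<in>Pow S. gsign (S - T) T * rep y (S - T) * rep x T)"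
    unfolding rep_times g_mult_def
    by (rule sum.reindex_bij_witness[where i = "\<lambda>T. S - T" and j = "\<lambda>T. S - T"])
       (auto simp: Diff_Diff_Int Int_absorb1)
  also have "\<dots> = (\<Sum>T\<in>Pow S. (-1) ^ (card T * card (S - T)) * (gsign T (S - T) * rep x T * rep y (S - T)))"
  proof (intro sum.cong refl)
    fix T assume "T \<in> Pow S"
    then have "finite T" "finite (S - T)" "T \<inter> (S - T) = {}" using S by (auto intro: finite_subset)
    then have "gsign (S - T) T = (-1) ^ (card T * card (S - T)) * (gsign T (S - T) :: 'a)"
      by (rule gsign_swap)
    then show "gsign (S - T) T * rep y (S - T) * rep x T =
        (-1) ^ (card T * card (S - T)) * (gsign T (S - T) * rep x T * rep y (S - T))"
      by (simp only: ac_simps)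
  qed
  finally show ?thesis .
qed

lemma rep_times_eq_0:
  assumes "\<And>T. T \<subseteq> S \<Longrightarrow> rep x T = 0 \<or> rep y (S - T) = 0"
  shows "rep (x * y) S = 0"
  unfolding rep_times g_mult_def using assms by (intro sum.neutral) auto

lemma square_monomial_eq_0:
  assumes "\<And>S. S \<noteq> S\<^sub>0 \<Longrightarrow> rep y S = 0" "S\<^sub>0 \<noteq> {}"
  shows "y * y = 0"
proof (rule grassmann_eqI)
  fix S show "rep (y * y) S = rep 0 S"
    unfolding rep_zero using assms by (intro rep_times_eq_0) (metis Diff_disjoint Int_absorb)
qed

section \<open>Even and odd elements\<close>

lift_definition even_part :: "'k::field grassmann \<Rightarrow> 'k grassmann"
  is "\<lambda>a S. if even (card S) then a S else 0" by simp

lift_definition odd_part :: "'k::field grassmann \<Rightarrow> 'k grassmann"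
  is "\<lambda>a S. if odd (card S) then a S else 0" by simp

definition grassmann_even :: "'k::field grassmann \<Rightarrow> bool" where
  "grassmann_even x \<longleftrightarrow> (\<forall>S. odd (card S) \<longrightarrow> rep x S = 0)"

definition grassmann_odd :: "'k::field grassmann \<Rightarrow> bool" where
  "grassmann_odd x \<longleftrightarrow> (\<forall>S. even (card S) \<longrightarrow> rep x S = 0)"

lemma even_part_add_odd_part: "even_part x + odd_part x = x"
  by (rule grassmann_eqI) (simp add: rep_plus even_part.rep_eq odd_part.rep_eq)

lemma grassmann_even_even_part: "grassmann_even (even_part x)"
  by (simp add: grassmann_even_def even_part.rep_eq)

lemma grassmann_odd_odd_part: "grassmann_odd (odd_part x)"
  by (simp add: grassmann_odd_def odd_part.rep_eq)

lemma grassmann_even_commute: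
  assumes "grassmann_even x"
  shows "x * y = y * x"
proof (rule grassmann_eqI)
  fix S
  show "rep (x * y) S = rep (y * x) S"
  proof (cases "finite S")
    case True
    show ?thesis unfolding rep_times_swap[OF True, of y x] unfolding rep_times g_mult_def
    proof (intro sum.cong refl)
      fix T
      show "gsign T (S - T) * rep x T * rep y (S - T) =
          (-1) ^ (card T * card (S - T)) * (gsign T (S - T) * rep x T * rep y (S - T))"
        using assms by (cases "even (card T)") (auto simp: grassmann_even_def)
    qed
  qed (simp add: rep_infinite)
qed

lemma grassmann_odd_anticommute:
  assumes "grassmann_odd x" "grassmann_odd y"
  shows "y * x = - (x * y)"
proof (rule grassmann_eqI)
  fix S
  show "rep (y * x) S = rep (- (x * y)) S"
  proof (cases "finite S")
    case True
    show ?thesis unfolding rep_times_swap[OF True, of y x] unfolding rep_uminus rep_times g_mult_def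
      unfolding sum_negf[symmetric]
    proof (intro sum.cong refl)
      fix T
      show "(-1) ^ (card T * card (S - T)) * (gsign T (S - T) * rep x T * rep y (S - T)) =
          - (gsign T (S - T) * rep x T * rep y (S - T))"
        using assms by (cases "odd (card T) \<and> odd (card (S - T))") (auto simp: grassmann_odd_def)
    qed
  qed (simp add: rep_infinite)
qed

lemma grassmann_odd_square:
  assumes "grassmann_odd x" "(2::'k::field) \<noteq> 0"
  shows "x * x = (0::'k grassmann)"
proof (rule grassmann_eqI)
  fix S
  have "rep (x * x) S = - rep (x * x) S"
    using grassmann_odd_anticommute[OF assms(1) assms(1)] by (metis rep_uminus)
  then have "2 * rep (x * x) S = 0" by simp
  then show "rep (x * x) S = rep 0 S" using assms(2) by (simp add: rep_zero)
qed

lemma rep_times_eq_0_by_card: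
  assumes "\<And>S. P (card S) \<Longrightarrow> rep x S = 0" "\<And>S. Q (card S) \<Longrightarrow> rep y S = 0"
    and "\<And>m n. R (m + n) \<Longrightarrow> P m \<or> Q n" and "R (card S)"
  shows "rep (x * y) S = 0"
proof (cases "finite S")
  case True
  show ?thesis
  proof (rule rep_times_eq_0)
    fix T assume "T \<subseteq> S"
    then have "card T + card (S - T) = card S"
      using True by (metis card_Diff_subset card_mono finite_subset le_add_diff_inverse)
    then show "rep x T = 0 \<or> rep y (S - T) = 0" using assms by metis
  qed
qed (simp add: rep_infinite)

lemma grassmann_even_mult: "grassmann_even x \<Longrightarrow> grassmann_even y \<Longrightarrow> grassmann_even (x * y)"
  unfolding grassmann_even_def
  by (intro allI impI, rule rep_times_eq_0_by_card[where P = odd and Q = odd and R = odd]) auto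

lemma grassmann_even_mult_odd: "grassmann_odd x \<Longrightarrow> grassmann_odd y \<Longrightarrow> grassmann_even (x * y)"
  unfolding grassmann_even_def grassmann_odd_def
  by (intro allI impI, rule rep_times_eq_0_by_card[where P = even and Q = even and R = odd]) auto

lemma grassmann_odd_mult_left: "grassmann_even x \<Longrightarrow> grassmann_odd y \<Longrightarrow> grassmann_odd (x * y)"
  unfolding grassmann_even_def grassmann_odd_def
  by (intro allI impI, rule rep_times_eq_0_by_card[where P = odd and Q = even and R = even]) auto

lemma grassmann_odd_mult_right: "grassmann_odd x \<Longrightarrow> grassmann_even y \<Longrightarrow> grassmann_odd (x * y)"
  unfolding grassmann_even_def grassmann_odd_def
  by (intro allI impI, rule rep_times_eq_0_by_card[where P = even and Q = odd and R = even]) auto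

lemma grassmann_even_add: "grassmann_even x \<Longrightarrow> grassmann_even y \<Longrightarrow> grassmann_even (x + y)"
  by (simp add: grassmann_even_def rep_plus)

lemma grassmann_odd_add: "grassmann_odd x \<Longrightarrow> grassmann_odd y \<Longrightarrow> grassmann_odd (x + y)"
  by (simp add: grassmann_odd_def rep_plus)

lemma grassmann_even_power: "grassmann_even x \<Longrightarrow> grassmann_even (x ^ n)"
  by (induction n) (simp_all add: grassmann_even_mult, simp add: grassmann_even_def rep_one)

lift_definition monomial_part :: "nat set \<Rightarrow> 'k::field grassmann \<Rightarrow> 'k grassmann"
  is "\<lambda>S\<^sub>0 a S. if S = S\<^sub>0 then a S else 0" by auto

text \<open>Induction on the support: splitting off one monomial \<open>y\<close>, which is even and squares to
  zero, gives \<open>(z + y)^p = z^p + p z^(p-1) y = z^p\<close>.\<close>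

lemma grassmann_even_power_char_eq_0:
  fixes x :: "'k::field grassmann"
  assumes "of_nat p = (0::'k)" "p > 0" and "finite F" "\<forall>S\<in>F. S \<noteq> {}"
    and "grassmann_even x" "\<And>S. S \<notin> F \<Longrightarrow> rep x S = 0"
  shows "x ^ p = 0"
  using assms(3-)
proof (induction F arbitrary: x rule: finite_induct)
  case empty
  then have "x = 0" by (intro grassmann_eqI) (simp add: rep_zero)
  then show ?case using assms(2) by (simp add: power_0_left)
next
  case (insert S\<^sub>0 F)
  define y where "y = monomial_part S\<^sub>0 x"
  define z where "z = x - y"
  have rep_y: "rep y S = (if S = S\<^sub>0 then rep x S else 0)" for S
    by (simp add: y_def monomial_part.rep_eq)
  have rep_z: "rep z S = (if S = S\<^sub>0 then 0 else rep x S)" for S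
    by (simp add: z_def rep_minus rep_y)
  have "z ^ p = 0"
    using insert.prems by (intro insert.IH) (auto simp: grassmann_even_def rep_z)
  moreover have "grassmann_even y"
    using insert.prems by (simp add: grassmann_even_def rep_y)
  moreover have "y * y = 0"
    using insert.prems by (intro square_monomial_eq_0[of S\<^sub>0]) (simp_all add: rep_y)
  moreover obtain m where "p = Suc m" using assms(2) by (cases p) auto
  ultimately have "x ^ p = of_nat p * (z ^ m * y)"
    using power_add_square_zero[of z y m] grassmann_even_commute[of y z] by (simp add: z_def)
  then show ?case using of_nat_grassmann_eq_0[OF assms(1)] by simp
qed

lemma even_part_power_char_eq_0:
  fixes x :: "'k::field grassmann"
  assumes "of_nat p = (0::'k)" "p > 0" and "finite {S. rep x S \<noteq> 0}" "rep x {} = 0"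
  shows "even_part x ^ p = 0"
proof (rule grassmann_even_power_char_eq_0[OF assms(1,2) assms(3)])
  show "\<forall>S\<in>{S. rep x S \<noteq> 0}. S \<noteq> {}" using assms(4) by auto
  show "rep (even_part x) S = 0" if "S \<notin> {S. rep x S \<noteq> 0}" for S
    using that by (simp add: even_part.rep_eq)
qed (rule grassmann_even_even_part)

lemma grassmann_even_power_mult_odd_eq_0:
  fixes b\<^sub>0 b\<^sub>1 c\<^sub>0 c\<^sub>1 :: "'k::field grassmann"
  assumes b\<^sub>0: "grassmann_even b\<^sub>0" and b\<^sub>1: "grassmann_odd b\<^sub>1"
    and c\<^sub>0: "grassmann_even c\<^sub>0" and c\<^sub>1: "grassmann_odd c\<^sub>1" and "(2::'k) \<noteq> 0"
    and b\<^sub>0_nil: "b\<^sub>0 ^ Suc n = 0" and c\<^sub>0_nil: "c\<^sub>0 ^ Suc n = 0"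
  shows "(b\<^sub>0 * c\<^sub>0 + b\<^sub>1 * c\<^sub>1) ^ n * (b\<^sub>0 * c\<^sub>1 + b\<^sub>1 * c\<^sub>0) = 0"
proof -
  have b\<^sub>1_sq: "b\<^sub>1 * b\<^sub>1 = 0" and c\<^sub>1_sq: "c\<^sub>1 * c\<^sub>1 = 0"
    using assms by (simp_all add: grassmann_odd_square)
  have "b\<^sub>1 * c\<^sub>1 * (b\<^sub>0 * c\<^sub>1) = b\<^sub>1 * (c\<^sub>1 * b\<^sub>0) * c\<^sub>1"
    by (simp only: mult.assoc)
  also have "\<dots> = b\<^sub>1 * b\<^sub>0 * (c\<^sub>1 * c\<^sub>1)"
    by (simp only: grassmann_even_commute[OF b\<^sub>0, of c\<^sub>1, symmetric] mult.assoc)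
  finally have "b\<^sub>1 * c\<^sub>1 * (b\<^sub>0 * c\<^sub>1) = b\<^sub>1 * b\<^sub>0 * (c\<^sub>1 * c\<^sub>1)" .
  moreover have "b\<^sub>1 * c\<^sub>1 * (b\<^sub>1 * c\<^sub>0) = b\<^sub>1 * (c\<^sub>1 * b\<^sub>1) * c\<^sub>0"
    by (simp only: mult.assoc)
  then have "b\<^sub>1 * c\<^sub>1 * (b\<^sub>1 * c\<^sub>0) = - (b\<^sub>1 * b\<^sub>1 * (c\<^sub>1 * c\<^sub>0))"
    by (simp add: grassmann_odd_anticommute[OF b\<^sub>1 c\<^sub>1] mult.assoc)
  ultimately have annihilate: "b\<^sub>1 * c\<^sub>1 * (b\<^sub>0 * c\<^sub>1 + b\<^sub>1 * c\<^sub>0) = 0"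
    by (simp add: distrib_left b\<^sub>1_sq c\<^sub>1_sq)
  have "b\<^sub>0 * c\<^sub>0 * (b\<^sub>1 * c\<^sub>1) = b\<^sub>1 * c\<^sub>1 * (b\<^sub>0 * c\<^sub>0)"
    by (intro grassmann_even_commute grassmann_even_mult b\<^sub>0 c\<^sub>0)
  then have "(b\<^sub>0 * c\<^sub>0 + b\<^sub>1 * c\<^sub>1) ^ n * (b\<^sub>0 * c\<^sub>1 + b\<^sub>1 * c\<^sub>0)
      = (b\<^sub>0 * c\<^sub>0) ^ n * (b\<^sub>0 * c\<^sub>1 + b\<^sub>1 * c\<^sub>0)"
    using annihilate by (rule power_add_mult_annihilated)
  also have "\<dots> = b\<^sub>0 ^ n * c\<^sub>0 ^ n * (b\<^sub>0 * c\<^sub>1 + b\<^sub>1 * c\<^sub>0)"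
    by (simp only: power_mult_commuting[OF grassmann_even_commute[OF b\<^sub>0]])
  also have "\<dots> = b\<^sub>0 ^ n * (c\<^sub>0 ^ n * b\<^sub>0) * c\<^sub>1 + b\<^sub>0 ^ n * (c\<^sub>0 ^ n * b\<^sub>1) * c\<^sub>0"
    by (simp only: distrib_left mult.assoc)
  also have "\<dots> = b\<^sub>0 ^ Suc n * c\<^sub>0 ^ n * c\<^sub>1 + b\<^sub>0 ^ n * b\<^sub>1 * c\<^sub>0 ^ Suc n"
    unfolding grassmann_even_commute[OF b\<^sub>0, of "c\<^sub>0 ^ n", symmetric]
      grassmann_even_commute[OF grassmann_even_power[OF c\<^sub>0, of n], of b\<^sub>1]
    by (simp only: mult.assoc power_Suc2)
  also have "\<dots> = 0"
    by (simp only: b\<^sub>0_nil c\<^sub>0_nil mult_zero_left mult_zero_right add_0)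
  finally show ?thesis .
qed

lemma grassmann_commutator_by_parts:
  assumes a\<^sub>0: "grassmann_even a\<^sub>0" and a\<^sub>1: "grassmann_odd a\<^sub>1"
    and x\<^sub>0: "grassmann_even x\<^sub>0" and x\<^sub>1: "grassmann_odd x\<^sub>1"
  shows "(a\<^sub>0 + a\<^sub>1) * (x\<^sub>0 + x\<^sub>1) - (x\<^sub>0 + x\<^sub>1) * (a\<^sub>0 + a\<^sub>1) = 2 * (a\<^sub>1 * x\<^sub>1)"
proof -
  have "(a\<^sub>0 + a\<^sub>1) * (x\<^sub>0 + x\<^sub>1) - (x\<^sub>0 + x\<^sub>1) * (a\<^sub>0 + a\<^sub>1) =
      (a\<^sub>0 * (x\<^sub>0 + x\<^sub>1) - (x\<^sub>0 + x\<^sub>1) * a\<^sub>0) + (a\<^sub>1 * x\<^sub>0 - x\<^sub>0 * a\<^sub>1) + (a\<^sub>1 * x\<^sub>1 - x\<^sub>1 * a\<^sub>1)"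
    by (simp add: algebra_simps)
  also have "\<dots> = 2 * (a\<^sub>1 * x\<^sub>1)"
    unfolding grassmann_even_commute[OF a\<^sub>0, of "x\<^sub>0 + x\<^sub>1"] grassmann_even_commute[OF x\<^sub>0, of a\<^sub>1]
      grassmann_odd_anticommute[OF a\<^sub>1 x\<^sub>1]
    by (simp add: mult_2)
  finally show ?thesis .
qed

lemma grassmann_commutator_power_by_parts:
  assumes a\<^sub>0: "grassmann_even a\<^sub>0" and a\<^sub>1: "grassmann_odd a\<^sub>1"
    and x\<^sub>0: "grassmann_even x\<^sub>0" and x\<^sub>1: "grassmann_odd x\<^sub>1" and two: "(2::'k::field) \<noteq> 0"
    and x\<^sub>0_x\<^sub>1: "x\<^sub>0 ^ n * x\<^sub>1 = 0"
  shows "((a\<^sub>0 + a\<^sub>1) * (x\<^sub>0 + x\<^sub>1) - (x\<^sub>0 + x\<^sub>1) * (a\<^sub>0 + a\<^sub>1)) * (a\<^sub>0 + a\<^sub>1) ^ n * (x\<^sub>0 + x\<^sub>1) ^ n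
    = (0 :: 'k grassmann)"
proof -
  define w where "w = a\<^sub>1 * x\<^sub>1"
  have "w * a\<^sub>1 = - (a\<^sub>1 * a\<^sub>1 * x\<^sub>1)"
    unfolding w_def mult.assoc grassmann_odd_anticommute[OF a\<^sub>1 x\<^sub>1] by simp
  then have "w * (a\<^sub>0 + a\<^sub>1) = a\<^sub>0 * w"
    by (simp add: distrib_left grassmann_odd_square[OF a\<^sub>1 two] grassmann_even_commute[OF a\<^sub>0, of w])
  then have wa: "w * (a\<^sub>0 + a\<^sub>1) ^ n = a\<^sub>0 ^ n * w" by (rule mult_power_intertwine)
  have "w * (x\<^sub>0 + x\<^sub>1) = x\<^sub>0 * w"
    by (simp add: w_def distrib_left mult.assoc grassmann_odd_square[OF x\<^sub>1 two]
        grassmann_even_commute[OF x\<^sub>0, of "a\<^sub>1 * x\<^sub>1"])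
  then have "w * (x\<^sub>0 + x\<^sub>1) ^ n = x\<^sub>0 ^ n * w" by (rule mult_power_intertwine)
  also have "\<dots> = a\<^sub>1 * (x\<^sub>0 ^ n * x\<^sub>1)"
    unfolding w_def mult.assoc[symmetric]
    by (simp only: grassmann_even_commute[OF grassmann_even_power[OF x\<^sub>0, of n], of a\<^sub>1])
  finally have wx: "w * (x\<^sub>0 + x\<^sub>1) ^ n = 0" by (simp add: x\<^sub>0_x\<^sub>1)
  show ?thesis
    unfolding grassmann_commutator_by_parts[OF a\<^sub>0 a\<^sub>1 x\<^sub>0 x\<^sub>1] w_def[symmetric]
    by (simp add: mult.assoc wa wx)
qed

lemma grassmann_kappa_eq_0:
  fixes a b c :: "'k::field grassmann"
  assumes two: "(2::'k) \<noteq> 0"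
    and b_nil: "even_part b ^ Suc n = 0" and c_nil: "even_part c ^ Suc n = 0"
  shows "(a * (b * c) - (b * c) * a) * a ^ n * (b * c) ^ n = 0"
proof -
  define a\<^sub>0 a\<^sub>1 where "a\<^sub>0 = even_part a" and "a\<^sub>1 = odd_part a"
  define b\<^sub>0 b\<^sub>1 where "b\<^sub>0 = even_part b" and "b\<^sub>1 = odd_part b"
  define c\<^sub>0 c\<^sub>1 where "c\<^sub>0 = even_part c" and "c\<^sub>1 = odd_part c"
  have b\<^sub>0: "grassmann_even b\<^sub>0" and b\<^sub>1: "grassmann_odd b\<^sub>1"
    and c\<^sub>0: "grassmann_even c\<^sub>0" and c\<^sub>1: "grassmann_odd c\<^sub>1"
    by (simp_all add: b\<^sub>0_def b\<^sub>1_def c\<^sub>0_def c\<^sub>1_def grassmann_even_even_part grassmann_odd_odd_part)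
  have a: "a = a\<^sub>0 + a\<^sub>1"
    by (simp add: a\<^sub>0_def a\<^sub>1_def even_part_add_odd_part)
  have "b * c = (b\<^sub>0 + b\<^sub>1) * (c\<^sub>0 + c\<^sub>1)"
    by (simp add: b\<^sub>0_def b\<^sub>1_def c\<^sub>0_def c\<^sub>1_def even_part_add_odd_part)
  then have bc: "b * c = (b\<^sub>0 * c\<^sub>0 + b\<^sub>1 * c\<^sub>1) + (b\<^sub>0 * c\<^sub>1 + b\<^sub>1 * c\<^sub>0)"
    by (simp add: algebra_simps)
  show ?thesis
    unfolding a bc
  proof (rule grassmann_commutator_power_by_parts)
    show "grassmann_even (b\<^sub>0 * c\<^sub>0 + b\<^sub>1 * c\<^sub>1)"
      by (intro grassmann_even_add grassmann_even_mult grassmann_even_mult_odd b\<^sub>0 b\<^sub>1 c\<^sub>0 c\<^sub>1)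
    show "grassmann_odd (b\<^sub>0 * c\<^sub>1 + b\<^sub>1 * c\<^sub>0)"
      by (intro grassmann_odd_add grassmann_odd_mult_left grassmann_odd_mult_right b\<^sub>0 b\<^sub>1 c\<^sub>0 c\<^sub>1)
    show "(b\<^sub>0 * c\<^sub>0 + b\<^sub>1 * c\<^sub>1) ^ n * (b\<^sub>0 * c\<^sub>1 + b\<^sub>1 * c\<^sub>0) = 0"
      using b\<^sub>0 b\<^sub>1 c\<^sub>0 c\<^sub>1 two b_nil[folded b\<^sub>0_def] c_nil[folded c\<^sub>0_def]
      by (rule grassmann_even_power_mult_odd_eq_0)
  qed (simp_all add: a\<^sub>0_def a\<^sub>1_def grassmann_even_even_part grassmann_odd_odd_part two)
qed

section \<open>Homomorphisms from the free algebra\<close>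

lemma FA_add: "f \<in> FA \<Longrightarrow> g \<in> FA \<Longrightarrow> fa_add f g \<in> FA"
  unfolding FA_def fa_add_def
  by (auto intro: finite_subset[of _ "{w. f w \<noteq> 0} \<union> {w. g w \<noteq> 0}"])

lemma FA_smult: "f \<in> FA \<Longrightarrow> fa_smult c f \<in> FA"
  unfolding FA_def fa_smult_def
  by (auto intro: finite_subset[of _ "{w. f w \<noteq> 0}"])

lemma FA_mult:
  assumes "f \<in> FA" "g \<in> FA"
  shows "fa_mult f g \<in> FA"
proof -
  have "{w. fa_mult f g w \<noteq> 0} \<subseteq> (\<lambda>(a, b). a @ b) ` ({w. f w \<noteq> 0} \<times> {w. g w \<noteq> 0})"
  proof
    fix w assume "w \<in> {w. fa_mult f g w \<noteq> 0}"
    then obtain i where "f (take i w) * g (drop i w) \<noteq> 0"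
      unfolding fa_mult_def using sum.not_neutral_contains_not_neutral by force
    then show "w \<in> (\<lambda>(a, b). a @ b) ` ({w. f w \<noteq> 0} \<times> {w. g w \<noteq> 0})"
      by (intro image_eqI[of _ _ "(take i w, drop i w)"]) auto
  qed
  moreover have "finite ((\<lambda>(a, b). a @ b) ` ({w. f w \<noteq> 0} \<times> {w. g w \<noteq> 0}))"
    using assms by (simp add: FA_def)
  ultimately show ?thesis
    using assms by (auto simp: FA_def fa_mult_def intro: finite_subset)
qed

lemma FA_pow: "f \<in> FA \<Longrightarrow> fa_pow f n \<in> FA"
proof (induction n)
  case 0
  show ?case by (simp add: FA_def)
qed (simp add: FA_mult)

lemma FA_comm: "f \<in> FA \<Longrightarrow> g \<in> FA \<Longrightarrow> fa_comm f g \<in> FA"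
  unfolding fa_comm_def by (intro FA_add FA_smult FA_mult)

lemma FA_kappa: "u \<in> FA \<Longrightarrow> v \<in> FA \<Longrightarrow> kappa p u v \<in> FA"
  unfolding kappa_def by (intro FA_mult FA_comm FA_pow)

definition grassmann_of :: "((nat list \<Rightarrow> 'k::field) \<Rightarrow> (nat set \<Rightarrow> 'k)) \<Rightarrow> (nat list \<Rightarrow> 'k) \<Rightarrow> 'k grassmann"
  where "grassmann_of h f = Abs_grassmann (h f)"

context
  fixes h :: "(nat list \<Rightarrow> 'k::field) \<Rightarrow> (nat set \<Rightarrow> 'k)"
  assumes h: "fa_hom h"
begin

lemma rep_grassmann_of: "f \<in> FA \<Longrightarrow> rep (grassmann_of h f) = h f"
  unfolding grassmann_of_def using h unfolding fa_hom_def G0_def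
  by (intro Abs_grassmann_inverse) auto

lemma grassmann_of_mult:
  "f \<in> FA \<Longrightarrow> g \<in> FA \<Longrightarrow> grassmann_of h (fa_mult f g) = grassmann_of h f * grassmann_of h g"
  by (rule grassmann_eqI) (use h in \<open>simp add: rep_grassmann_of FA_mult rep_times fa_hom_def\<close>)

lemma grassmann_of_comm:
  assumes "f \<in> FA" "g \<in> FA"
  shows "grassmann_of h (fa_comm f g)
    = grassmann_of h f * grassmann_of h g - grassmann_of h g * grassmann_of h f"
proof (rule grassmann_eqI)
  fix S
  show "rep (grassmann_of h (fa_comm f g)) S
      = rep (grassmann_of h f * grassmann_of h g - grassmann_of h g * grassmann_of h f) S"
    using h assms
    by (simp add: fa_comm_def rep_grassmann_of FA_add FA_smult FA_mult rep_minus rep_times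
        fa_hom_def g_add_def g_smult_def)
qed

lemma grassmann_of_pow: "f \<in> FA \<Longrightarrow> grassmann_of h (fa_pow f (Suc n)) = grassmann_of h f ^ Suc n"
proof (induction n)
  case (Suc n)
  have "grassmann_of h (fa_pow f (Suc (Suc n))) = grassmann_of h (fa_pow f (Suc n)) * grassmann_of h f"
    using Suc.prems by (subst fa_pow.simps(2)) (simp add: grassmann_of_mult FA_pow del: fa_pow.simps)
  then show ?case using Suc by (simp only: power_Suc2[of _ "Suc n"])
qed simp

lemma grassmann_of_kappa:
  assumes "u \<in> FA" "v \<in> FA" "p > 1"
  defines "a \<equiv> grassmann_of h u" and "b \<equiv> grassmann_of h v"
  shows "grassmann_of h (kappa p u v) = (a * b - b * a) * a ^ (p - 1) * b ^ (p - 1)"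
proof -
  have "p - 1 = Suc (p - 2)" using assms(3) by simp
  then show ?thesis
    using assms
    by (simp add: kappa_def grassmann_of_mult grassmann_of_comm grassmann_of_pow FA_comm FA_mult
        FA_pow del: fa_pow.simps(2))
qed

lemma even_part_grassmann_of_power:
  assumes "f \<in> FA" "of_nat p = (0::'k)" "p > 0"
  shows "even_part (grassmann_of h f) ^ p = 0"
  using h assms unfolding fa_hom_def G0_def
  by (intro even_part_power_char_eq_0) (auto simp: rep_grassmann_of)

end

theorem corollary2p3:
  fixes p :: nat and u v w :: "nat list \<Rightarrow> 'k::field"
  assumes "prime p" and "p > 2" and "CHAR('k) = p"
    and "u \<in> FA" and "v \<in> FA" and "w \<in> FA"
  shows "kappa p u (fa_mult v w) \<in> TG0"
proof -
  have char: "of_nat p = (0::'k)" using assms(3) by (metis of_nat_CHAR)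
  have two: "(2::'k) \<noteq> 0"
    using assms(2,3) of_nat_eq_0_iff_char_dvd[of 2, where 'a = 'k] by (auto dest: dvd_imp_le)
  have vw: "fa_mult v w \<in> FA" using assms(5,6) by (rule FA_mult)
  have kappa_FA: "kappa p u (fa_mult v w) \<in> FA" using assms(4) vw by (rule FA_kappa)
  have "h (kappa p u (fa_mult v w)) = (\<lambda>_. 0)" if h: "fa_hom h" for h
  proof -
    let ?a = "grassmann_of h u" and ?b = "grassmann_of h v" and ?c = "grassmann_of h w"
    have "grassmann_of h (kappa p u (fa_mult v w))
        = (?a * (?b * ?c) - (?b * ?c) * ?a) * ?a ^ (p - 1) * (?b * ?c) ^ (p - 1)"
      using assms vw by (simp add: grassmann_of_kappa[OF h] grassmann_of_mult[OF h])
    also have "\<dots> = 0"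
      using assms(2,5,6) char
      by (intro grassmann_kappa_eq_0 two) (simp_all add: even_part_grassmann_of_power[OF h])
    finally show ?thesis
      using rep_grassmann_of[OF h kappa_FA] by (metis rep_zero)
  qed
  then show ?thesis using kappa_FA by (simp add: TG0_def)
qed

end
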